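(* Let $M_1$ and $M_2$ be matroids on a finite set $E$. If $M_1$ is connected and $M_2$ has exactly two connected components, $P$ and $Q$, then the mixing graph $G_{M_1,M_2}$ has at most two connected components.
   Context: With $r_1,r_2$ the rank functions of $M_1,M_2$, let $\mathscr{X}=\{A\subseteq E: r_1(A)\ne r_2(A)\}$. The mixing graph $G_{M_1,M_2}$ has vertex set $\mathscr{X}$, and $AB$ is an edge iff either (i) $A\subsetneq B$ or $B\subsetneq A$, or (ii) $A\cap B\notin\mathscr{X}$, $A\cup B\notin\mathscr{X}$, and $|A\triangle B|=2$ ($\triangle$ is symmetric difference). That $M_2$ has exactly two connected components $P,Q$ means $E=P\cup Q$ is a partition with $M_2=M_2|P\oplus M_2|Q$ and both $M_2|P$, $M_2|Q$ connected. *)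

theory Defs
  imports Main
begin

definition matroid :: "'a set \<Rightarrow> ('a set \<Rightarrow> bool) \<Rightarrow> bool" where
  "matroid E indep \<longleftrightarrow> finite E \<and> (\<forall>X. indep X \<longrightarrow> X \<subseteq> E) \<and> indep {} \<and>
     (\<forall>X Y. indep Y \<and> X \<subseteq> Y \<longrightarrow> indep X) \<and>
     (\<forall>X Y. indep X \<and> indep Y \<and> card X < card Y \<longrightarrow> (\<exists>e\<in>Y - X. indep (insert e X)))"

definition rank :: "('a set \<Rightarrow> bool) \<Rightarrow> 'a set \<Rightarrow> nat" where
  "rank indep A = Max {card X | X. X \<subseteq> A \<and> indep X}"

definition circuit :: "'a set \<Rightarrow> ('a set \<Rightarrow> bool) \<Rightarrow> 'a set \<Rightarrow> bool" where
  "circuit E indep C \<longleftrightarrow> C \<subseteq> E \<and> \<not> indep C \<and> (\<forall>x\<in>C. indep (C - {x}))"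

definition connected_matroid :: "'a set \<Rightarrow> ('a set \<Rightarrow> bool) \<Rightarrow> bool" where
  "connected_matroid E indep \<longleftrightarrow>
     (\<forall>x\<in>E. \<forall>y\<in>E. x \<noteq> y \<longrightarrow> (\<exists>C. circuit E indep C \<and> x \<in> C \<and> y \<in> C))"

definition restrict_matroid :: "('a set \<Rightarrow> bool) \<Rightarrow> 'a set \<Rightarrow> ('a set \<Rightarrow> bool)" where
  "restrict_matroid indep P = (\<lambda>X. indep X \<and> X \<subseteq> P)"

text \<open>M has exactly two connected components P and Q:
  E = P \<union> Q is a partition into nonempty parts, M = M|P \<oplus> M|Q, and M|P, M|Q connected.\<close>
definition two_components :: "'a set \<Rightarrow> ('a set \<Rightarrow> bool) \<Rightarrow> 'a set \<Rightarrow> 'a set \<Rightarrow> bool" where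
  "two_components E indep P Q \<longleftrightarrow>
     P \<noteq> {} \<and> Q \<noteq> {} \<and> P \<inter> Q = {} \<and> P \<union> Q = E \<and>
     (\<forall>X. X \<subseteq> E \<longrightarrow> (indep X \<longleftrightarrow> indep (X \<inter> P) \<and> indep (X \<inter> Q))) \<and>
     connected_matroid P (restrict_matroid indep P) \<and>
     connected_matroid Q (restrict_matroid indep Q)"

definition mix_vertices :: "'a set \<Rightarrow> ('a set \<Rightarrow> bool) \<Rightarrow> ('a set \<Rightarrow> bool) \<Rightarrow> 'a set set" where
  "mix_vertices E I1 I2 = {A. A \<subseteq> E \<and> rank I1 A \<noteq> rank I2 A}"

definition mix_edges :: "'a set \<Rightarrow> ('a set \<Rightarrow> bool) \<Rightarrow> ('a set \<Rightarrow> bool) \<Rightarrow> ('a set \<times> 'a set) set" where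
  "mix_edges E I1 I2 = {(A, B). A \<in> mix_vertices E I1 I2 \<and> B \<in> mix_vertices E I1 I2 \<and>
     (A \<subset> B \<or> B \<subset> A \<or>
      (A \<inter> B \<notin> mix_vertices E I1 I2 \<and> A \<union> B \<notin> mix_vertices E I1 I2 \<and>
       card ((A - B) \<union> (B - A)) = 2))}"

definition mix_components :: "'a set \<Rightarrow> ('a set \<Rightarrow> bool) \<Rightarrow> ('a set \<Rightarrow> bool) \<Rightarrow> 'a set set set" where
  "mix_components E I1 I2 = mix_vertices E I1 I2 // ((mix_edges E I1 I2)\<^sup>*)"

end

theory Submission
  imports Defs
begin

text \<open>If r1(E) \<noteq> r2(E), then E is a vertex comparable with every other vertex. Otherwise
  connectivity of M1 gives r1(E) < r1(P) + r1(Q), while r2(E) = r2(P) + r2(Q), so P or Q, say P, is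
  a vertex. Every vertex A is then joined to P or to Q, by induction on the symmetric difference of
  A and P. If A and P are incomparable and neither adding an element of P - A nor deleting an
  element of A \<inter> Q yields a vertex, then the ranks of A differ by one. If r2(A) = r1(A) + 1,
  exchanging such a pair gives a vertex adjacent to A by an edge of type (ii). If
  r1(A) = r2(A) + 1, then A \<inter> Q consists of coloops of M1|A but is dependent in M2, and
  submodularity of r1 shows that both A \<inter> Q and Q are vertices, so A is joined to Q through
  A \<inter> Q.\<close>

locale indep_matroid =
  fixes E :: "'a set" and indep :: "'a set \<Rightarrow> bool"
  assumes matroid: "matroid E indep"
begin

lemma finite_ground: "finite E"
  using matroid unfolding matroid_def by blast

lemma indep_subset_ground: "indep X \<Longrightarrow> X \<subseteq> E"
  using matroid unfolding matroid_def by blast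

lemma indep_empty: "indep {}"
  using matroid unfolding matroid_def by blast

lemma indep_subset: "indep Y \<Longrightarrow> X \<subseteq> Y \<Longrightarrow> indep X"
  using matroid unfolding matroid_def by blast

lemma indep_augment: "indep X \<Longrightarrow> indep Y \<Longrightarrow> card X < card Y \<Longrightarrow> \<exists>e\<in>Y - X. indep (insert e X)"
  using matroid unfolding matroid_def by blast

lemma finite_indep: "indep X \<Longrightarrow> finite X"
  using finite_ground indep_subset_ground finite_subset by blast

lemma finite_indep_cards: "finite {card Y | Y. Y \<subseteq> X \<and> indep Y}"
proof (rule finite_subset)
  show "{card Y | Y. Y \<subseteq> X \<and> indep Y} \<subseteq> card ` Pow E"
    using indep_subset_ground by auto
  show "finite (card ` Pow E)"
    using finite_ground by simp
qed

lemma card_le_rank: "Y \<subseteq> X \<Longrightarrow> indep Y \<Longrightarrow> card Y \<le> rank indep X"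
  unfolding rank_def using finite_indep_cards by (rule Max_ge) blast

lemma obtain_max_indep_subset:
  obtains Y where "Y \<subseteq> X" "indep Y" "card Y = rank indep X"
proof -
  have "{} \<subseteq> X \<and> indep {}"
    using indep_empty by simp
  then have "{card Y | Y. Y \<subseteq> X \<and> indep Y} \<noteq> {}"
    by blast
  with finite_indep_cards have "rank indep X \<in> {card Y | Y. Y \<subseteq> X \<and> indep Y}"
    unfolding rank_def by (rule Max_in)
  then show ?thesis
    using that by auto
qed

lemma rank_mono: "X \<subseteq> Y \<Longrightarrow> rank indep X \<le> rank indep Y"
  by (rule obtain_max_indep_subset[of X]) (metis card_le_rank order_trans)

lemma rank_le_card: "finite X \<Longrightarrow> rank indep X \<le> card X"
  by (rule obtain_max_indep_subset[of X]) (metis card_mono)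

lemma rank_indep: "indep X \<Longrightarrow> rank indep X = card X"
  using card_le_rank[of X X] rank_le_card[of X] finite_indep by simp

lemma rank_empty: "rank indep {} = 0"
  using rank_indep indep_empty by simp

lemma rank_less_card_if_dep: "finite X \<Longrightarrow> \<not> indep X \<Longrightarrow> rank indep X < card X"
proof (rule obtain_max_indep_subset[of X])
  fix Y assume "finite X" "\<not> indep X" "Y \<subseteq> X" "indep Y" "card Y = rank indep X"
  then show "rank indep X < card X"
    using card_subset_eq le_neq_implies_less card_mono by metis
qed

lemma indep_extend_to_max:
  "indep I \<Longrightarrow> I \<subseteq> X \<Longrightarrow> \<exists>J. I \<subseteq> J \<and> J \<subseteq> X \<and> indep J \<and> card J = rank indep X"
proof (induction "rank indep X - card I" arbitrary: I rule: less_induct)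
  case less
  show ?case
  proof (cases "card I < rank indep X")
    case False
    then have "card I = rank indep X"
      using card_le_rank[OF less.prems(2,1)] by simp
    then show ?thesis
      using less.prems by blast
  next
    case True
    obtain Y where Y: "Y \<subseteq> X" "indep Y" "card Y = rank indep X"
      by (rule obtain_max_indep_subset)
    with True obtain e where e: "e \<in> Y - I" "indep (insert e I)"
      using indep_augment[OF less.prems(1) Y(2)] by auto
    have "card (insert e I) = Suc (card I)"
      using e finite_indep less.prems(1) by simp
    then have closer: "rank indep X - card (insert e I) < rank indep X - card I"
      using True by simp
    have "insert e I \<subseteq> X"
      using e Y(1) less.prems(2) by blast
    then show ?thesis
      using less.hyps[OF closer e(2)] by blast
  qed
qed

lemma rank_submodular: "rank indep (A \<union> B) + rank indep (A \<inter> B) \<le> rank indep A + rank indep B"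
proof -
  obtain I where I: "I \<subseteq> A \<inter> B" "indep I" "card I = rank indep (A \<inter> B)"
    by (rule obtain_max_indep_subset)
  then obtain J where J: "I \<subseteq> J" "J \<subseteq> A \<union> B" "indep J" "card J = rank indep (A \<union> B)"
    using indep_extend_to_max[of I "A \<union> B"] by blast
  have fin: "finite (J \<inter> A)" "finite (J \<inter> B)"
    using finite_indep J(3) by auto
  have "card J + card I \<le> card (J \<inter> A) + card (J \<inter> B)"
  proof -
    have "J = (J \<inter> A) \<union> (J \<inter> B)"
      using J(2) by blast
    moreover have "card I \<le> card ((J \<inter> A) \<inter> (J \<inter> B))"
      using I J fin by (intro card_mono) auto
    ultimately show ?thesis
      using card_Un_Int[OF fin] by simp
  qed
  also have "\<dots> \<le> rank indep A + rank indep B"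
    using card_le_rank indep_subset J(3) by (intro add_mono) auto
  finally show ?thesis
    using I J by simp
qed

lemma rank_insert_le: "rank indep (insert e X) \<le> rank indep X + 1"
proof -
  have "rank indep (X \<union> {e}) + rank indep (X \<inter> {e}) \<le> rank indep X + rank indep {e}"
    by (rule rank_submodular)
  moreover have "rank indep {e} \<le> 1"
    using rank_le_card[of "{e}"] by simp
  ultimately show ?thesis
    by simp
qed

lemma rank_remove_bounds:
  "rank indep (X - {e}) \<le> rank indep X \<and> rank indep X \<le> rank indep (X - {e}) + 1"
proof (cases "e \<in> X")
  case True
  then have "insert e (X - {e}) = X"
    by auto
  then show ?thesis
    using rank_mono[of "X - {e}" X] rank_insert_le[of e "X - {e}"] by auto
qed simp

lemma rank_union_eq_if_spanned:
  assumes "finite S" "A \<subseteq> B" "\<forall>p\<in>S. rank indep (insert p A) = rank indep A"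
  shows "rank indep (B \<union> S) = rank indep B"
  using assms
proof (induction S rule: finite_induct)
  case empty
  then show ?case by simp
next
  case (insert p S)
  show ?case
  proof (cases "p \<in> B")
    case True
    then show ?thesis
      using insert by (simp add: insert_absorb)
  next
    case False
    have "(B \<union> S) \<union> insert p A = B \<union> insert p S" "(B \<union> S) \<inter> insert p A = A"
      using False insert by auto
    then have "rank indep (B \<union> insert p S) + rank indep A \<le> rank indep (B \<union> S) + rank indep (insert p A)"
      using rank_submodular[of "B \<union> S" "insert p A"] by simp
    moreover have "rank indep B \<le> rank indep (B \<union> insert p S)"
      by (rule rank_mono) auto
    ultimately show ?thesis
      using insert by simp
  qed
qed

lemma rank_diff_coloops:
  assumes "finite S" "S \<subseteq> A" "\<forall>q\<in>S. rank indep (A - {q}) + 1 = rank indep A"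
  shows "rank indep (A - S) + card S = rank indep A"
  using assms
proof (induction S rule: finite_induct)
  case empty
  then show ?case by simp
next
  case (insert q S)
  have "(A - S) \<union> (A - {q}) = A" "(A - S) \<inter> (A - {q}) = A - insert q S"
    using insert by auto
  then have "rank indep A + rank indep (A - insert q S) \<le> rank indep (A - S) + rank indep (A - {q})"
    using rank_submodular[of "A - S" "A - {q}"] by simp
  moreover have "insert q (A - insert q S) = A - S"
    using insert by auto
  then have "rank indep (A - S) \<le> rank indep (A - insert q S) + 1"
    using rank_insert_le[of q "A - insert q S"] by simp
  ultimately show ?case
    using insert by simp
qed

lemma rank_coloops:
  assumes "finite S" "S \<subseteq> A" "\<forall>q\<in>S. rank indep (A - {q}) + 1 = rank indep A"
  shows "rank indep S = card S"
proof -
  have "(A - S) \<union> S = A" "(A - S) \<inter> S = {}"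
    using assms(2) by auto
  then have "rank indep A \<le> rank indep (A - S) + rank indep S"
    using rank_submodular[of "A - S" S] by (simp add: rank_empty)
  then show ?thesis
    using rank_diff_coloops[OF assms] rank_le_card[OF assms(1)] by simp
qed

lemma rank_direct_sum:
  assumes "P \<inter> Q = {}" "P \<union> Q = E"
    and indep_iff: "\<forall>X. X \<subseteq> E \<longrightarrow> (indep X \<longleftrightarrow> indep (X \<inter> P) \<and> indep (X \<inter> Q))"
    and "X \<subseteq> E"
  shows "rank indep X = rank indep (X \<inter> P) + rank indep (X \<inter> Q)"
proof (rule antisym)
  have "X = (X \<inter> P) \<union> (X \<inter> Q)" "(X \<inter> P) \<inter> (X \<inter> Q) = {}"
    using assms by auto
  then show "rank indep X \<le> rank indep (X \<inter> P) + rank indep (X \<inter> Q)"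
    using rank_submodular[of "X \<inter> P" "X \<inter> Q"] by (simp add: rank_empty)
next
  obtain Y1 where Y1: "Y1 \<subseteq> X \<inter> P" "indep Y1" "card Y1 = rank indep (X \<inter> P)"
    by (rule obtain_max_indep_subset)
  obtain Y2 where Y2: "Y2 \<subseteq> X \<inter> Q" "indep Y2" "card Y2 = rank indep (X \<inter> Q)"
    by (rule obtain_max_indep_subset)
  have "(Y1 \<union> Y2) \<inter> P = Y1" "(Y1 \<union> Y2) \<inter> Q = Y2"
    using Y1(1) Y2(1) assms(1) by auto
  moreover have "Y1 \<union> Y2 \<subseteq> E"
    using Y1(1) Y2(1) assms(4) by blast
  ultimately have "indep (Y1 \<union> Y2)"
    using indep_iff Y1(2) Y2(2) by simp
  then have "card (Y1 \<union> Y2) \<le> rank indep X"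
    using Y1(1) Y2(1) by (intro card_le_rank) auto
  moreover have "card (Y1 \<union> Y2) = card Y1 + card Y2"
    using Y1 Y2 assms(1) finite_indep by (intro card_Un_disjoint) auto
  ultimately show "rank indep (X \<inter> P) + rank indep (X \<inter> Q) \<le> rank indep X"
    using Y1 Y2 by simp
qed

text \<open>A circuit C meeting both P and Q splits into independent sets C \<inter> P and C \<inter> Q; two
  applications of submodularity then charge the rank defect of C against r(P) + r(Q) - r(E).\<close>

lemma connected_rank_less:
  assumes "connected_matroid E indep"
    and "P \<inter> Q = {}" "P \<union> Q = E" "P \<noteq> {}" "Q \<noteq> {}"
  shows "rank indep E < rank indep P + rank indep Q"
proof -
  obtain p q where pq: "p \<in> P" "q \<in> Q"
    using assms by blast
  moreover have "p \<in> E" "q \<in> E" "p \<noteq> q"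
    using pq assms(2,3) by auto
  ultimately obtain C where C: "circuit E indep C" "p \<in> C" "q \<in> C"
    using assms(1) unfolding connected_matroid_def by blast
  then have CE: "C \<subseteq> E" and dep: "\<not> indep C" and minimal: "\<forall>x\<in>C. indep (C - {x})"
    unfolding circuit_def by auto
  have finC: "finite C"
    using CE finite_ground finite_subset by blast
  have "C \<inter> P \<subseteq> C - {q}" "C \<inter> Q \<subseteq> C - {p}"
    using pq assms(2) by auto
  then have "indep (C \<inter> P)" "indep (C \<inter> Q)"
    using minimal C(2,3) indep_subset by blast+
  moreover have "card C = card (C \<inter> P) + card (C \<inter> Q)"
  proof -
    have "C = (C \<inter> P) \<union> (C \<inter> Q)"
      using CE assms(3) by blast
    then show ?thesis
      using card_Un_disjoint[of "C \<inter> P" "C \<inter> Q"] finC assms(2) by auto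
  qed
  moreover have "rank indep C < card C"
    using rank_less_card_if_dep finC dep by blast
  moreover have "(C \<union> P) \<union> Q = E" "(C \<union> P) \<inter> Q = C \<inter> Q"
    using CE assms(2,3) by auto
  then have "rank indep E + rank indep (C \<inter> Q) \<le> rank indep (C \<union> P) + rank indep Q"
    using rank_submodular[of "C \<union> P" Q] by simp
  moreover have "rank indep (C \<union> P) + rank indep (C \<inter> P) \<le> rank indep C + rank indep P"
    by (rule rank_submodular)
  ultimately show ?thesis
    using rank_indep by simp
qed

end

lemma mix_vertices_iff: "A \<in> mix_vertices E I1 I2 \<longleftrightarrow> A \<subseteq> E \<and> rank I1 A \<noteq> rank I2 A"
  by (simp add: mix_vertices_def)

lemma sym_mix_edges: "sym (mix_edges E I1 I2)"
  unfolding mix_edges_def sym_def by (auto simp: Int_commute Un_commute)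

lemma mix_edges_rtrancl_if_comparable:
  assumes "A \<in> mix_vertices E I1 I2" "B \<in> mix_vertices E I1 I2" "A \<subseteq> B \<or> B \<subseteq> A"
  shows "(A, B) \<in> (mix_edges E I1 I2)\<^sup>*"
proof (cases "A = B")
  case False
  then have "(A, B) \<in> mix_edges E I1 I2"
    using assms unfolding mix_edges_def by auto
  then show ?thesis
    by blast
qed simp

lemma card_quotient_rtrancl_le_2:
  assumes "sym R" "\<forall>x\<in>V. (x, a) \<in> R\<^sup>* \<or> (x, b) \<in> R\<^sup>*"
  shows "card (V // R\<^sup>*) \<le> 2"
proof -
  have "equiv UNIV (R\<^sup>*)"
    using assms(1) by (intro equivI) (simp_all add: refl_rtrancl sym_rtrancl trans_rtrancl)
  then have "V // R\<^sup>* \<subseteq> {R\<^sup>* `` {a}, R\<^sup>* `` {b}}"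
    using assms(2) equiv_class_eq unfolding quotient_def by fastforce
  then have "card (V // R\<^sup>*) \<le> card {R\<^sup>* `` {a}, R\<^sup>* `` {b}}"
    by (intro card_mono) auto
  also have "\<dots> \<le> 2"
    by (simp add: card_insert_if)
  finally show ?thesis .
qed

locale two_matroids = M1: indep_matroid E I1 + M2: indep_matroid E I2
  for E :: "'a set" and I1 I2 :: "'a set \<Rightarrow> bool"
begin

abbreviation "V \<equiv> mix_vertices E I1 I2"
abbreviation "R \<equiv> mix_edges E I1 I2"

lemma vertex_subset_ground: "A \<in> V \<Longrightarrow> A \<subseteq> E"
  by (simp add: mix_vertices_iff)

lemma insert_nonvertex_ranks:
  assumes "A \<in> V" "insert p A \<subseteq> E" "insert p A \<notin> V"
  shows "rank I2 A = rank I1 A + 1 \<and> rank I1 (insert p A) = rank I1 A + 1 \<and> rank I2 (insert p A) = rank I2 A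
    \<or> rank I1 A = rank I2 A + 1 \<and> rank I1 (insert p A) = rank I1 A \<and> rank I2 (insert p A) = rank I2 A + 1"
  using assms M1.rank_mono[OF subset_insertI, of A p] M2.rank_mono[OF subset_insertI, of A p]
    M1.rank_insert_le[of p A] M2.rank_insert_le[of p A]
  by (auto simp: mix_vertices_iff)

lemma remove_nonvertex_ranks:
  assumes "A \<in> V" "A - {q} \<notin> V"
  shows "rank I2 A = rank I1 A + 1 \<and> rank I1 (A - {q}) = rank I1 A \<and> rank I2 (A - {q}) + 1 = rank I2 A
    \<or> rank I1 A = rank I2 A + 1 \<and> rank I1 (A - {q}) + 1 = rank I1 A \<and> rank I2 (A - {q}) = rank I2 A"
  using assms M1.rank_remove_bounds[of A q] M2.rank_remove_bounds[of A q]
  by (auto simp: mix_vertices_iff)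

end

locale mixing_split = two_matroids +
  fixes P Q :: "'a set"
  assumes partition: "P \<inter> Q = {}" "P \<union> Q = E"
    and rank2_split: "X \<subseteq> E \<Longrightarrow> rank I2 X = rank I2 (X \<inter> P) + rank I2 (X \<inter> Q)"
    and rank_ground_eq: "rank I1 E = rank I2 E"
begin

lemma rank2_exchange:
  assumes "X \<subseteq> E" "p \<in> P - X" "q \<in> X \<inter> Q"
  shows "rank I2 (insert p (X - {q})) + rank I2 X = rank I2 (insert p X) + rank I2 (X - {q})"
proof -
  have "insert p (X - {q}) \<inter> P = insert p X \<inter> P" "(X - {q}) \<inter> P = X \<inter> P"
    "insert p (X - {q}) \<inter> Q = (X - {q}) \<inter> Q" "insert p X \<inter> Q = X \<inter> Q"
    using assms partition by auto
  moreover have "insert p (X - {q}) \<subseteq> E" "insert p X \<subseteq> E" "X - {q} \<subseteq> E"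
    using assms partition by auto
  ultimately show ?thesis
    using rank2_split assms(1) by simp
qed

lemma exchange_adjacent_vertex:
  assumes A: "A \<in> V" and p: "p \<in> P - A" "insert p A \<notin> V" and q: "q \<in> A \<inter> Q" "A - {q} \<notin> V"
    and less: "rank I2 A = rank I1 A + 1"
  shows "insert p (A - {q}) \<in> V \<and> (A, insert p (A - {q})) \<in> R"
proof -
  let ?B = "insert p (A - {q})"
  have AE: "A \<subseteq> E"
    using A by (rule vertex_subset_ground)
  have "insert p A \<subseteq> E"
    using AE p(1) partition by auto
  then have grow: "rank I1 (insert p A) = rank I1 A + 1" "rank I2 (insert p A) = rank I2 A"
    using insert_nonvertex_ranks[OF A _ p(2)] less by auto
  have shrink: "rank I1 (A - {q}) = rank I1 A" "rank I2 (A - {q}) + 1 = rank I2 A"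
    using remove_nonvertex_ranks[OF A q(2)] less by auto
  have "?B \<union> A = insert p A" "?B \<inter> A = A - {q}"
    using p(1) q(1) by auto
  then have "rank I1 A + 1 \<le> rank I1 ?B"
    using M1.rank_submodular[of ?B A] grow shrink by simp
  moreover have "rank I2 ?B + 1 = rank I2 A"
    using rank2_exchange[OF AE p(1) q(1)] grow shrink by simp
  moreover have "?B \<subseteq> E"
    using AE p(1) partition by auto
  ultimately have "?B \<in> V"
    using less by (simp add: mix_vertices_iff)
  moreover have "A \<inter> ?B = A - {q}" "A \<union> ?B = insert p A" "(A - ?B) \<union> (?B - A) = {q, p}"
    using p(1) q(1) by auto
  moreover have "p \<noteq> q"
    using p(1) q(1) partition by auto
  ultimately show ?thesis
    using A p(2) q(2) unfolding mix_edges_def by auto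
qed

lemma coloop_case_ranks:
  assumes A: "A \<in> V" and p0: "p0 \<in> P - A" and q0: "q0 \<in> A \<inter> Q"
    and grow: "\<forall>p\<in>P - A. insert p A \<notin> V" and shrink: "\<forall>q\<in>A \<inter> Q. A - {q} \<notin> V"
    and greater: "rank I1 A = rank I2 A + 1"
  shows "rank I1 (A \<union> Q) = rank I1 E" "rank I1 (A \<inter> Q) = card (A \<inter> Q)"
    and "rank I2 (A \<inter> Q) < card (A \<inter> Q)" "rank I2 (A \<inter> P) < rank I2 P"
proof -
  have AE: "A \<subseteq> E"
    using A by (rule vertex_subset_ground)
  have finite_sub: "finite X" if "X \<subseteq> E" for X
    using that M1.finite_ground finite_subset by blast
  have grown: "rank I1 (insert p A) = rank I1 A" "rank I2 (insert p A) = rank I2 A + 1"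
    if "p \<in> P - A" for p
    using insert_nonvertex_ranks[OF A _ grow[rule_format, OF that]] that AE partition greater by auto
  have shrunk: "rank I1 (A - {q}) + 1 = rank I1 A" "rank I2 (A - {q}) = rank I2 A"
    if "q \<in> A \<inter> Q" for q
    using remove_nonvertex_ranks[OF A shrink[rule_format, OF that]] greater by auto
  have "(A \<union> Q) \<union> (P - A) = E"
    using AE partition by auto
  then show "rank I1 (A \<union> Q) = rank I1 E"
    using M1.rank_union_eq_if_spanned[of "P - A" A "A \<union> Q"] grown finite_sub partition by auto
  show "rank I1 (A \<inter> Q) = card (A \<inter> Q)"
    using M1.rank_coloops[of "A \<inter> Q" A] shrunk finite_sub AE by auto
  have "(A - {q0}) \<inter> P = A \<inter> P" "(A - {q0}) \<inter> Q = A \<inter> Q - {q0}" "A - {q0} \<subseteq> E"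
    using q0 AE partition by auto
  then have "rank I2 (A \<inter> Q - {q0}) = rank I2 (A \<inter> Q)"
    using rank2_split[of "A - {q0}"] rank2_split[OF AE] shrunk(2)[OF q0] by simp
  moreover have "rank I2 (A \<inter> Q - {q0}) < card (A \<inter> Q)"
    using M2.rank_le_card[of "A \<inter> Q - {q0}"] finite_sub AE q0 card_Diff1_less[of "A \<inter> Q" q0] by auto
  ultimately show "rank I2 (A \<inter> Q) < card (A \<inter> Q)"
    by simp
  have "insert p0 A \<inter> P = insert p0 (A \<inter> P)" "insert p0 A \<inter> Q = A \<inter> Q" "insert p0 A \<subseteq> E"
    using p0 AE partition by auto
  then have "rank I2 (insert p0 (A \<inter> P)) = rank I2 (A \<inter> P) + 1"
    using rank2_split[of "insert p0 A"] rank2_split[OF AE] grown(2)[OF p0] by simp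
  moreover have "rank I2 (insert p0 (A \<inter> P)) \<le> rank I2 P"
    using p0 by (intro M2.rank_mono) auto
  ultimately show "rank I2 (A \<inter> P) < rank I2 P"
    by simp
qed

lemma coloop_case_reaches_Q:
  assumes A: "A \<in> V" and p0: "p0 \<in> P - A" and q0: "q0 \<in> A \<inter> Q"
    and grow: "\<forall>p\<in>P - A. insert p A \<notin> V" and shrink: "\<forall>q\<in>A \<inter> Q. A - {q} \<notin> V"
    and greater: "rank I1 A = rank I2 A + 1"
  shows "(A, Q) \<in> R\<^sup>*"
proof -
  note ranks = coloop_case_ranks[OF assms]
  have AE: "A \<subseteq> E"
    using A by (rule vertex_subset_ground)
  have "rank I1 (A \<union> Q) + rank I1 (A \<inter> Q) \<le> rank I1 A + rank I1 Q"
    by (rule M1.rank_submodular)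
  moreover have "E \<inter> P = P" "E \<inter> Q = Q"
    using partition by auto
  then have "rank I2 E = rank I2 P + rank I2 Q"
    using rank2_split[of E] by simp
  moreover have "rank I2 A = rank I2 (A \<inter> P) + rank I2 (A \<inter> Q)"
    using rank2_split[OF AE] .
  ultimately have "rank I2 Q < rank I1 Q"
    using ranks rank_ground_eq greater by linarith
  then have "Q \<in> V"
    using partition by (auto simp: mix_vertices_iff)
  moreover have "A \<inter> Q \<in> V"
    using ranks AE by (auto simp: mix_vertices_iff)
  ultimately have "(A, A \<inter> Q) \<in> R\<^sup>*" "(A \<inter> Q, Q) \<in> R\<^sup>*"
    using A mix_edges_rtrancl_if_comparable by blast+
  then show ?thesis
    by (rule rtrancl_trans)
qed

lemma step_towards_P:
  assumes A: "A \<in> V" and incomparable: "\<not> (A \<subseteq> P \<or> P \<subseteq> A)"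
  shows "(A, Q) \<in> R\<^sup>* \<or> (\<exists>B\<in>V. (A, B) \<in> R\<^sup>* \<and> (B - P) \<union> (P - B) \<subset> (A - P) \<union> (P - A))"
proof -
  obtain p0 where p0: "p0 \<in> P - A"
    using incomparable by blast
  have "A \<subseteq> P \<union> Q"
    using A partition by (simp add: mix_vertices_iff)
  then obtain q0 where q0: "q0 \<in> A \<inter> Q"
    using incomparable by blast
  consider (grow) p where "p \<in> P - A" "insert p A \<in> V"
    | (shrink) q where "q \<in> A \<inter> Q" "A - {q} \<in> V"
    | (stuck) "\<forall>p\<in>P - A. insert p A \<notin> V" "\<forall>q\<in>A \<inter> Q. A - {q} \<notin> V"
    by blast
  then show ?thesis
  proof cases
    case grow
    then have "(A, insert p A) \<in> R\<^sup>*"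
      using A mix_edges_rtrancl_if_comparable by blast
    moreover have "(insert p A - P) \<union> (P - insert p A) \<subset> (A - P) \<union> (P - A)"
      using grow by blast
    ultimately show ?thesis
      using grow by blast
  next
    case shrink
    then have "(A, A - {q}) \<in> R\<^sup>*"
      using A mix_edges_rtrancl_if_comparable by blast
    moreover have "(A - {q} - P) \<union> (P - (A - {q})) \<subset> (A - P) \<union> (P - A)"
      using shrink partition by blast
    ultimately show ?thesis
      using shrink by blast
  next
    case stuck
    have "insert p0 A \<subseteq> E"
      using A p0 partition by (auto simp: mix_vertices_iff)
    then consider "rank I2 A = rank I1 A + 1" | "rank I1 A = rank I2 A + 1"
      using insert_nonvertex_ranks[OF A] stuck(1) p0 by blast
    then show ?thesis
    proof cases
      case 1
      let ?B = "insert p0 (A - {q0})"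
      have "?B \<in> V \<and> (A, ?B) \<in> R"
        using exchange_adjacent_vertex[OF A p0 _ q0 _ 1] stuck p0 q0 by blast
      moreover have "(?B - P) \<union> (P - ?B) \<subset> (A - P) \<union> (P - A)"
        using p0 q0 partition by blast
      ultimately show ?thesis
        by blast
    next
      case 2
      then show ?thesis
        using coloop_case_reaches_Q[OF A p0 q0 stuck] by blast
    qed
  qed
qed

lemma reaches_P_or_Q:
  assumes "P \<in> V" "A \<in> V"
  shows "(A, P) \<in> R\<^sup>* \<or> (A, Q) \<in> R\<^sup>*"
  using assms(2)
proof (induction "card ((A - P) \<union> (P - A))" arbitrary: A rule: less_induct)
  case less
  show ?case
  proof (cases "A \<subseteq> P \<or> P \<subseteq> A")
    case True
    then show ?thesis
      using mix_edges_rtrancl_if_comparable[OF less.prems assms(1)] by blast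
  next
    case False
    from step_towards_P[OF less.prems False] show ?thesis
    proof
      assume "\<exists>B\<in>V. (A, B) \<in> R\<^sup>* \<and> (B - P) \<union> (P - B) \<subset> (A - P) \<union> (P - A)"
      then obtain B where B: "B \<in> V" "(A, B) \<in> R\<^sup>*" "(B - P) \<union> (P - B) \<subset> (A - P) \<union> (P - A)"
        by blast
      have "(A - P) \<union> (P - A) \<subseteq> E"
        using vertex_subset_ground[OF less.prems] partition by blast
      then have "finite ((A - P) \<union> (P - A))"
        using M1.finite_ground finite_subset by blast
      then have "card ((B - P) \<union> (P - B)) < card ((A - P) \<union> (P - A))"
        using B(3) by (rule psubset_card_mono)
      then have "(B, P) \<in> R\<^sup>* \<or> (B, Q) \<in> R\<^sup>*"
        using B(1) by (rule less.hyps)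
      then show ?thesis
        using rtrancl_trans[OF B(2)] by blast
    qed simp
  qed
qed

lemma P_or_Q_vertex:
  assumes "connected_matroid E I1" "P \<noteq> {}" "Q \<noteq> {}"
  shows "P \<in> V \<or> Q \<in> V"
proof -
  have "rank I1 E < rank I1 P + rank I1 Q"
    using M1.connected_rank_less[OF assms(1) partition assms(2,3)] .
  moreover have "E \<inter> P = P" "E \<inter> Q = Q"
    using partition by auto
  then have "rank I2 E = rank I2 P + rank I2 Q"
    using rank2_split[of E] by simp
  ultimately show ?thesis
    using rank_ground_eq partition by (auto simp: mix_vertices_iff)
qed

end

context two_matroids
begin

lemma vertices_reach_ground:
  assumes "rank I1 E \<noteq> rank I2 E" "A \<in> V"
  shows "(A, E) \<in> R\<^sup>*"
proof -
  have "E \<in> V"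
    using assms(1) by (simp add: mix_vertices_iff)
  then show ?thesis
    using mix_edges_rtrancl_if_comparable[OF assms(2)] vertex_subset_ground[OF assms(2)] by blast
qed

lemma vertices_reach_components:
  assumes "connected_matroid E I1" "two_components E I2 P Q" "rank I1 E = rank I2 E" "A \<in> V"
  shows "(A, P) \<in> R\<^sup>* \<or> (A, Q) \<in> R\<^sup>*"
proof -
  have PQ: "P \<inter> Q = {}" "P \<union> Q = E" "P \<noteq> {}" "Q \<noteq> {}"
    and indep2_iff: "\<forall>X. X \<subseteq> E \<longrightarrow> (I2 X \<longleftrightarrow> I2 (X \<inter> P) \<and> I2 (X \<inter> Q))"
    using assms(2) unfolding two_components_def by blast+
  note split = M2.rank_direct_sum[OF PQ(1,2) indep2_iff]
  interpret PQ: mixing_split E I1 I2 P Q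
    by unfold_locales (fact PQ(1,2) split assms(3))+
  interpret QP: mixing_split E I1 I2 Q P
  proof unfold_locales
    show "Q \<inter> P = {}" "Q \<union> P = E"
      using PQ by auto
    show "rank I2 X = rank I2 (X \<inter> Q) + rank I2 (X \<inter> P)" if "X \<subseteq> E" for X
      using split[OF that] by linarith
  qed (rule assms(3))
  from PQ.P_or_Q_vertex[OF assms(1) PQ(3,4)] show ?thesis
  proof
    assume "P \<in> V"
    then show ?thesis
      using PQ.reaches_P_or_Q assms(4) by blast
  next
    assume "Q \<in> V"
    then show ?thesis
      using QP.reaches_P_or_Q assms(4) by blast
  qed
qed

end

theorem lemma3p8:
  fixes E :: "'a set" and I1 I2 :: "'a set \<Rightarrow> bool" and P Q :: "'a set"
  assumes "matroid E I1" and "matroid E I2"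
    and "connected_matroid E I1"
    and "two_components E I2 P Q"
  shows "card (mix_components E I1 I2) \<le> 2"
proof -
  interpret two_matroids E I1 I2
    using assms(1,2) by (simp add: two_matroids_def indep_matroid_def)
  obtain S T where "\<forall>A\<in>V. (A, S) \<in> R\<^sup>* \<or> (A, T) \<in> R\<^sup>*"
  proof (cases "rank I1 E = rank I2 E")
    case True
    then show ?thesis
      using that vertices_reach_components[OF assms(3,4)] by blast
  next
    case False
    then show ?thesis
      using that vertices_reach_ground by blast
  qed
  then show ?thesis
    unfolding mix_components_def by (rule card_quotient_rtrancl_le_2[OF sym_mix_edges])
qed

end
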